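(* For any connected component $\gamma$ of $V_{reg,\Delta}$, the elements $A_\gamma(\sigma)=[C(\sigma)'_\gamma]$, $\sigma\in{\cal B}(\Delta)$, satisfy the relations $$A_\gamma(\sigma)=\sum_{\beta\in\sigma,\ c_{\alpha\beta}\ne0}\operatorname{sign}(c_{\alpha\beta})\,A_\gamma(\sigma\cup\{\alpha\}\setminus\{\beta\})$$ in the quotient group ${\cal C}_\Delta/{\cal LC}_\Delta$. Here $\sigma\in{\cal B}(\Delta)$ and $\alpha\in\Delta\setminus\sigma$ are arbitrary, and $\alpha=\sum_{\beta\in\sigma}c_{\alpha\beta}\beta$.
   Context: Let $V$ be a real vector space of dimension $r$, and $\Delta\subset V\setminus\{0\}$ finite, spanning $V$, with $\Delta=-\Delta$. ${\cal B}(\Delta)$ is the set of subsets of $\Delta$ forming a basis of $V$. Walls are hyperplanes spanned by $r-1$ linearly independent elements of $\Delta$, and $V_{reg,\Delta}$ is the complement of their union. For $A\subset V$, $[A]$ is its characteristic function. A polyhedral cone is $C(h_1,\dots,h_n)=\{\sum t_ih_i:t_i\ge0\}$; $C(\emptyset)=\{0\}$, and $C^0$ denotes the relative interior of $C$. ${\cal C}(V)$ is the additive group of $\mathbb Z$-valued functions on $V$ generated by characteristic functions of polyhedral cones. ${\cal C}_\Delta$ is its subgroup generated by the $[C(\kappa)]$ with $\kappa\subset\Delta$, and ${\cal LC}_\Delta$ is the subgroup generated by those $[C(\kappa)]$, $\kappa\subset\Delta$, for which $C(\kappa)$ contains a line. For $\sigma\in{\cal B}(\Delta)$ and $p=\sum_{\alpha\in\sigma}p_\alpha\alpha\in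 V_{reg,\Delta}$ (so all $p_\alpha\ne0$), set $$C(\sigma)'_p=C(\{\alpha\in\sigma:p_\alpha>0\})+C(\{\alpha\in\sigma:p_\alpha<0\})^0=\Big\{\sum_{\alpha\in\sigma}t_\alpha\alpha:\ t_\alpha\ge0\text{ if }p_\alpha>0,\ t_\alpha>0\text{ if }p_\alpha<0\Big\}.$$ This depends only on the connected component $\gamma$ of $V_{reg,\Delta}$ containing $p$, and is denoted $C(\sigma)'_\gamma$; its characteristic function lies in ${\cal C}_\Delta$. *)

theory Defs
  imports "HOL-Analysis.Analysis"
begin

text \<open>V is modelled by a Euclidean space type 'a, r = DIM('a).\<close>

definition bases :: "'a::euclidean_space set \<Rightarrow> 'a set set" where
  "bases \<Delta> = {\<sigma>. \<sigma> \<subseteq> \<Delta> \<and> independent \<sigma> \<and> span \<sigma> = UNIV}"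

definition walls :: "'a::euclidean_space set \<Rightarrow> 'a set set" where
  "walls \<Delta> = {span S | S. S \<subseteq> \<Delta> \<and> independent S \<and> card S = DIM('a) - 1}"

definition Vreg :: "'a::euclidean_space set \<Rightarrow> 'a set" where
  "Vreg \<Delta> = UNIV - \<Union>(walls \<Delta>)"

definition pcone :: "'a::real_vector set \<Rightarrow> 'a set" where
  "pcone \<kappa> = {(\<Sum>x\<in>\<kappa>. t x *\<^sub>R x) | t. \<forall>x\<in>\<kappa>. t x \<ge> 0}"

definition contains_line :: "'a::real_vector set \<Rightarrow> bool" where
  "contains_line C \<longleftrightarrow> (\<exists>x v. v \<noteq> 0 \<and> (\<forall>t::real. x + t *\<^sub>R v \<in> C))"

definition cone_p :: "'a::euclidean_space set \<Rightarrow> 'a \<Rightarrow> 'a set" where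
  "cone_p \<sigma> p = {(\<Sum>a\<in>\<sigma>. t a *\<^sub>R a) | t.
      \<forall>a\<in>\<sigma>. (representation \<sigma> p a > 0 \<longrightarrow> t a \<ge> 0) \<and>
              (representation \<sigma> p a < 0 \<longrightarrow> t a > 0)}"

definition cone_gamma :: "'a::euclidean_space set \<Rightarrow> 'a set \<Rightarrow> 'a set" where
  "cone_gamma \<sigma> \<gamma> = cone_p \<sigma> (SOME p. p \<in> \<gamma>)"

definition A_gamma :: "'a::euclidean_space set \<Rightarrow> 'a set \<Rightarrow> 'a \<Rightarrow> int" where
  "A_gamma \<gamma> \<sigma> = indicator (cone_gamma \<sigma> \<gamma>)"

definition LC :: "'a::euclidean_space set \<Rightarrow> ('a \<Rightarrow> int) set" where
  "LC \<Delta> = {(\<lambda>v. \<Sum>\<kappa>\<in>{\<kappa>. \<kappa> \<subseteq> \<Delta> \<and> contains_line (pcone \<kappa>)}.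
                    n \<kappa> * indicator (pcone \<kappa>) v) | n. True}"

definition sign_int :: "real \<Rightarrow> int" where
  "sign_int c = (if c > 0 then 1 else if c < 0 then -1 else 0)"

end

theory Submission
  imports Defs "HOL-Library.List_Lexorder"
begin

(* Fix a generic point p of \<gamma>, write \<alpha> = \<Sum> c\<^sub>\<beta> \<beta> and let \<lambda> be the coefficients of the
   linear dependence \<Sum> \<lambda>\<^sub>x x = 0 on \<tau> = \<sigma> \<union> {\<alpha>}, normalised by \<lambda>\<^sub>\<alpha> = -1.  For \<lambda>\<^sub>y \<noteq> 0 the
   coordinates of v in the basis \<tau> - {y} are t - (t\<^sub>y / \<lambda>\<^sub>y) \<lambda>, t being its \<sigma>-coordinates.
   So v lies in C(\<tau> - {y})'_p iff v obeys the sign conditions of C(\<sigma>)'_p on the coordinates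
   with c\<^sub>\<beta> = 0, and y splits the support of \<lambda> with respect to the lexicographic key
   (t\<^sub>x / \<lambda>\<^sub>x, p\<^sub>x / \<lambda>\<^sub>x): the x with \<lambda>\<^sub>x > 0 above y, those with \<lambda>\<^sub>x < 0 below.  Counting the
   split points shows that the signed sum of the theorem is the indicator of those sign
   conditions when all c\<^sub>\<beta> \<le> 0, and 0 otherwise.  In the first case -\<alpha> is a positive
   combination of the \<beta> with c\<^sub>\<beta> \<noteq> 0, and inclusion-exclusion on the strict inequalities
   turns the indicator into a signed sum of cones generated by \<alpha>, these \<beta> and further
   basis vectors; each of them contains the line through \<alpha>. *)

section \<open>Sign bookkeeping\<close>

lemma prod_of_bool:
  "finite A \<Longrightarrow> (\<Prod>x\<in>A. of_bool (P x)) = (of_bool (\<forall>x\<in>A. P x) :: 'b::comm_semiring_1)"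
  by (induction A rule: finite_induct) auto

lemma of_bool_positive_inclusion_exclusion:
  fixes t :: "'x \<Rightarrow> real"
  assumes "finite R" "N \<subseteq> R"
  shows "of_bool ((\<forall>x\<in>R. 0 \<le> t x) \<and> (\<forall>x\<in>N. 0 < t x))
       = (\<Sum>T\<in>Pow N. (-1) ^ card T * of_bool ((\<forall>x\<in>R - T. 0 \<le> t x) \<and> (\<forall>x\<in>T. t x = 0)) :: int)"
proof -
  let ?nn = "\<lambda>x. of_bool (0 \<le> t x) :: int" and ?z = "\<lambda>x. of_bool (t x = 0) :: int"
  have fin: "finite N" "finite (R - N)"
    using assms finite_subset by auto
  have prod_split: "(\<Prod>x\<in>R - T. ?nn x) = (\<Prod>x\<in>R - N. ?nn x) * (\<Prod>x\<in>N - T. ?nn x)" if "T \<subseteq> N" for T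
  proof -
    have "(\<Prod>x\<in>R - N. ?nn x) * (\<Prod>x\<in>N - T. ?nn x) = (\<Prod>x\<in>(R - N) \<union> (N - T). ?nn x)"
      using fin by (intro prod.union_disjoint[symmetric]) auto
    also have "(R - N) \<union> (N - T) = R - T"
      using that assms(2) by auto
    finally show ?thesis ..
  qed
  have "(\<forall>x\<in>R. 0 \<le> t x) \<and> (\<forall>x\<in>N. 0 < t x) \<longleftrightarrow> (\<forall>x\<in>R - N. 0 \<le> t x) \<and> (\<forall>x\<in>N. 0 < t x)"
    using assms(2) by force
  then have "of_bool ((\<forall>x\<in>R. 0 \<le> t x) \<and> (\<forall>x\<in>N. 0 < t x))
      = (\<Prod>x\<in>R - N. ?nn x) * (\<Prod>x\<in>N. of_bool (0 < t x))"
    using fin by (simp add: prod_of_bool)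
  \<comment> \<open>Write [t > 0] as [t \<ge> 0] - [t = 0] and expand the product over N.\<close>
  also have "\<dots> = (\<Prod>x\<in>R - N. ?nn x) * (\<Prod>x\<in>N. ?nn x - ?z x)"
    by (intro arg_cong2[where f = "(*)"] prod.cong) auto
  also have "\<dots> = (\<Prod>x\<in>R - N. ?nn x) * (\<Sum>T\<in>Pow N. (-1) ^ card T * (\<Prod>x\<in>T. ?z x) * (\<Prod>x\<in>N - T. ?nn x))"
    using fin by (simp add: prod_diff_conv_sum)
  also have "\<dots> = (\<Sum>T\<in>Pow N. (-1) ^ card T * ((\<Prod>x\<in>T. ?z x) * (\<Prod>x\<in>R - T. ?nn x)))"
    unfolding sum_distrib_left
  proof (intro sum.cong refl)
    fix T assume "T \<in> Pow N"
    then show "(\<Prod>x\<in>R - N. ?nn x) * ((-1) ^ card T * (\<Prod>x\<in>T. ?z x) * (\<Prod>x\<in>N - T. ?nn x))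
        = (-1) ^ card T * ((\<Prod>x\<in>T. ?z x) * (\<Prod>x\<in>R - T. ?nn x))"
      using prod_split[of T] by (simp add: mult_ac)
  qed
  also have "\<dots> = (\<Sum>T\<in>Pow N. (-1) ^ card T * of_bool ((\<forall>x\<in>R - T. 0 \<le> t x) \<and> (\<forall>x\<in>T. t x = 0)))"
    using fin assms by (intro sum.cong refl) (auto simp: prod_of_bool finite_subset)
  finally show ?thesis .
qed

lemma sum_strict_minimum:
  fixes w :: "'x \<Rightarrow> 'b::linorder"
  assumes "finite A" "inj_on w A"
  shows "(\<Sum>y\<in>A. of_bool (\<forall>x\<in>A - {y}. w y < w x)) = (of_bool (A \<noteq> {}) :: int)"
proof (cases "A = {}")
  case False
  have "Min (w ` A) \<in> w ` A"
    using assms(1) False by simp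
  then obtain m where "m \<in> A" "w m = Min (w ` A)"
    by auto
  then have m: "m \<in> A" "\<forall>x\<in>A. w m \<le> w x"
    using assms(1) by simp_all
  have strict: "\<forall>x\<in>A - {m}. w m < w x"
    using m inj_on_eq_iff[OF assms(2)] by (metis DiffE insertI1 order_le_neq_trans)
  have "(\<forall>x\<in>A - {y}. w y < w x) \<longleftrightarrow> y = m" if "y \<in> A" for y
    using that m(1) strict by (metis DiffI less_asym singletonD)
  then show ?thesis
    using m(1) assms(1) False by (simp cong: sum.cong)
qed simp

lemma sum_strict_maximum:
  fixes w :: "'x \<Rightarrow> 'b::linorder"
  assumes "finite A" "inj_on w A"
  shows "(\<Sum>y\<in>A. of_bool (\<forall>x\<in>A - {y}. w x < w y)) = (of_bool (A \<noteq> {}) :: int)"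
proof (cases "A = {}")
  case False
  have "Max (w ` A) \<in> w ` A"
    using assms(1) False by simp
  then obtain m where "m \<in> A" "w m = Max (w ` A)"
    by auto
  then have m: "m \<in> A" "\<forall>x\<in>A. w x \<le> w m"
    using assms(1) by simp_all
  have strict: "\<forall>x\<in>A - {m}. w x < w m"
    using m inj_on_eq_iff[OF assms(2)] by (metis DiffE insertI1 order_le_neq_trans)
  have "(\<forall>x\<in>A - {y}. w x < w y) \<longleftrightarrow> y = m" if "y \<in> A" for y
    using that m(1) strict by (metis DiffI less_asym singletonD)
  then show ?thesis
    using m(1) assms(1) False by (simp cong: sum.cong)
qed simp

definition sign_split :: "('x \<Rightarrow> real) \<Rightarrow> ('x \<Rightarrow> 'b::linorder) \<Rightarrow> 'x set \<Rightarrow> 'x \<Rightarrow> bool" where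
  "sign_split l w S y \<longleftrightarrow> (\<forall>x\<in>S - {y}. (l x > 0 \<longrightarrow> w y < w x) \<and> (l x < 0 \<longrightarrow> w x < w y))"

lemma sign_split_positive_iff:
  fixes w :: "'x \<Rightarrow> 'b::linorder"
  assumes "y \<in> S" "l y > 0"
  shows "sign_split l w S y \<longleftrightarrow>
    (\<forall>x\<in>{x\<in>S. l x > 0}. \<forall>z\<in>{z\<in>S. l z < 0}. w z < w x) \<and> (\<forall>x\<in>{x\<in>S. l x > 0} - {y}. w y < w x)"
proof
  assume split: "sign_split l w S y"
  then have below: "\<forall>z\<in>{z\<in>S. l z < 0}. w z < w y" and above: "\<forall>x\<in>{x\<in>S. l x > 0} - {y}. w y < w x"
    using assms by (auto simp: sign_split_def)
  have "w z < w x" if "x \<in> {x\<in>S. l x > 0}" "z \<in> {z\<in>S. l z < 0}" for x z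
    using that below above by (cases "x = y") (auto intro: less_trans)
  with above show "(\<forall>x\<in>{x\<in>S. l x > 0}. \<forall>z\<in>{z\<in>S. l z < 0}. w z < w x) \<and> (\<forall>x\<in>{x\<in>S. l x > 0} - {y}. w y < w x)"
    by blast
qed (use assms in \<open>auto simp: sign_split_def\<close>)

lemma sign_split_negative_iff:
  fixes w :: "'x \<Rightarrow> 'b::linorder"
  assumes "y \<in> S" "l y < 0"
  shows "sign_split l w S y \<longleftrightarrow>
    (\<forall>x\<in>{x\<in>S. l x > 0}. \<forall>z\<in>{z\<in>S. l z < 0}. w z < w x) \<and> (\<forall>z\<in>{z\<in>S. l z < 0} - {y}. w z < w y)"
proof
  assume split: "sign_split l w S y"
  then have above: "\<forall>x\<in>{x\<in>S. l x > 0}. w y < w x" and below: "\<forall>z\<in>{z\<in>S. l z < 0} - {y}. w z < w y"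
    using assms by (auto simp: sign_split_def)
  have "w z < w x" if "x \<in> {x\<in>S. l x > 0}" "z \<in> {z\<in>S. l z < 0}" for x z
    using that below above by (cases "z = y") (auto intro: less_trans)
  with below show "(\<forall>x\<in>{x\<in>S. l x > 0}. \<forall>z\<in>{z\<in>S. l z < 0}. w z < w x) \<and> (\<forall>z\<in>{z\<in>S. l z < 0} - {y}. w z < w y)"
    by blast
qed (use assms in \<open>auto simp: sign_split_def\<close>)

lemma sum_sign_split:
  fixes w :: "'x \<Rightarrow> 'b::linorder"
  assumes "finite S" "inj_on w S" "\<forall>x\<in>S. l x \<noteq> 0"
  shows "(\<Sum>y\<in>S. sign_int (l y) * of_bool (sign_split l w S y))
       = of_bool (\<forall>x\<in>S. l x > 0) - of_bool (\<forall>x\<in>S. l x < 0)"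
proof -
  define P where "P = {x\<in>S. l x > 0}"
  define N where "N = {x\<in>S. l x < 0}"
  define separated where "separated \<longleftrightarrow> (\<forall>x\<in>P. \<forall>z\<in>N. w z < w x)"
  have S: "S = P \<union> N" "P \<inter> N = {}" and fin: "finite P" "finite N"
    using assms(1,3) by (auto simp: P_def N_def)
  have inj: "inj_on w P" "inj_on w N"
    using assms(2) S(1) inj_on_subset by blast+
  have "(\<Sum>y\<in>P. sign_int (l y) * of_bool (sign_split l w S y))
      = of_bool separated * (\<Sum>y\<in>P. of_bool (\<forall>x\<in>P - {y}. w y < w x))"
    unfolding sum_distrib_left
    by (intro sum.cong) (auto simp: sign_split_positive_iff P_def N_def separated_def sign_int_def)
  also have "\<dots> = of_bool separated * of_bool (P \<noteq> {})"
    using sum_strict_minimum[OF fin(1) inj(1)] by simp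
  finally have sum_P: "(\<Sum>y\<in>P. sign_int (l y) * of_bool (sign_split l w S y))
      = of_bool separated * of_bool (P \<noteq> {})" .
  have "(\<Sum>y\<in>N. sign_int (l y) * of_bool (sign_split l w S y))
      = - (of_bool separated * (\<Sum>y\<in>N. of_bool (\<forall>x\<in>N - {y}. w x < w y)))"
    unfolding sum_distrib_left sum_negf[symmetric]
    by (intro sum.cong) (auto simp: sign_split_negative_iff P_def N_def separated_def sign_int_def)
  also have "\<dots> = - (of_bool separated * of_bool (N \<noteq> {}))"
    using sum_strict_maximum[OF fin(2) inj(2)] by simp
  finally have sum_N: "(\<Sum>y\<in>N. sign_int (l y) * of_bool (sign_split l w S y))
      = - (of_bool separated * of_bool (N \<noteq> {}))" .
  have "(\<Sum>y\<in>S. sign_int (l y) * of_bool (sign_split l w S y))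
      = of_bool separated * (of_bool (P \<noteq> {}) - of_bool (N \<noteq> {}))"
    using sum.union_disjoint[OF fin S(2), of "\<lambda>y. sign_int (l y) * of_bool (sign_split l w S y)"]
    by (simp add: S(1)[symmetric] sum_P sum_N algebra_simps)
  also have "\<dots> = of_bool (N = {}) - of_bool (P = {})"
    by (cases "P = {}"; cases "N = {}") (simp_all add: separated_def)
  finally have "(\<Sum>y\<in>S. sign_int (l y) * of_bool (sign_split l w S y))
      = of_bool (N = {}) - of_bool (P = {})" .
  moreover have "N = {} \<longleftrightarrow> (\<forall>x\<in>S. l x > 0)" "P = {} \<longleftrightarrow> (\<forall>x\<in>S. l x < 0)"
    using assms(3) by (fastforce simp: P_def N_def linorder_neq_iff)+
  ultimately show ?thesis
    by simp
qed

lemma sign_condition_iff_lex: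
  fixes l r r' s s' :: real
  assumes "l \<noteq> 0" "s \<noteq> s'"
  shows "((l * (s - s') > 0 \<longrightarrow> l * (r - r') \<ge> 0) \<and> (l * (s - s') < 0 \<longrightarrow> l * (r - r') > 0))
     \<longleftrightarrow> (l > 0 \<longrightarrow> [r', s'] < [r, s]) \<and> (l < 0 \<longrightarrow> [r, s] < [r', s'])"
proof (cases "l > 0")
  case True
  then have "0 < l * u \<longleftrightarrow> 0 < u" "l * u < 0 \<longleftrightarrow> u < 0" "0 \<le> l * u \<longleftrightarrow> 0 \<le> u" for u
    by (simp_all add: zero_less_mult_iff mult_less_0_iff zero_le_mult_iff)
  then show ?thesis
    using assms(2) True by auto
next
  case False
  with assms(1) have "l < 0" by simp
  then have "0 < l * u \<longleftrightarrow> u < 0" "l * u < 0 \<longleftrightarrow> 0 < u" "0 \<le> l * u \<longleftrightarrow> u \<le> 0" for u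
    by (auto simp: zero_less_mult_iff mult_less_0_iff zero_le_mult_iff)
  then show ?thesis
    using assms(2) \<open>l < 0\<close> by auto
qed

section \<open>Coordinates in a basis\<close>

lemma representation_sum_scaleR:
  fixes B :: "'a::euclidean_space set"
  assumes "independent B" "x \<in> B"
  shows "representation B (\<Sum>b\<in>B. g b *\<^sub>R b) x = g x"
proof -
  have "representation B (\<Sum>b\<in>B. g b *\<^sub>R b) x = (\<Sum>b\<in>B. g b * representation B b x)"
    using assms(1) by (subst representation_sum) (auto simp: representation_scale span_base intro: span_scale)
  also have "\<dots> = (\<Sum>b\<in>B. if b = x then g b else 0)"
    using assms by (intro sum.cong) (auto simp: representation_basis)
  finally show ?thesis
    using assms by (simp add: finiteI_independent)
qed

lemma representation_Vreg_nonzero: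
  assumes "\<sigma> \<in> bases \<Delta>" "p \<in> Vreg \<Delta>" "b \<in> \<sigma>"
  shows "representation \<sigma> p b \<noteq> 0"
proof
  assume "representation \<sigma> p b = 0"
  then have "{x. representation \<sigma> p x \<noteq> 0} \<subseteq> \<sigma> - {b}"
    using representation_ne_zero by blast
  moreover have "p \<in> span {x. representation \<sigma> p x \<noteq> 0}"
  proof -
    have "p = (\<Sum>x | representation \<sigma> p x \<noteq> 0. representation \<sigma> p x *\<^sub>R x)"
      using assms(1) by (simp add: sum_nonzero_representation_eq bases_def)
    also have "\<dots> \<in> span {x. representation \<sigma> p x \<noteq> 0}"
      by (intro span_sum span_scale span_base) simp
    finally show ?thesis .
  qed
  ultimately have "p \<in> span (\<sigma> - {b})"
    using span_mono by blast
  moreover have "span (\<sigma> - {b}) \<in> walls \<Delta>"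
  proof -
    have "independent \<sigma>" "span \<sigma> = UNIV" "\<sigma> \<subseteq> \<Delta>"
      using assms(1) by (auto simp: bases_def)
    then have "card \<sigma> = DIM('a)"
      using basis_card_eq_dim[of \<sigma> UNIV] by simp
    then show ?thesis
      unfolding walls_def using \<open>independent \<sigma>\<close> \<open>\<sigma> \<subseteq> \<Delta>\<close> assms(3)
      by (intro CollectI exI[of _ "\<sigma> - {b}"])
        (auto simp: dependent_mono finiteI_independent)
  qed
  ultimately show False
    using assms(2) by (auto simp: Vreg_def)
qed

definition sign_cone :: "'a::euclidean_space set \<Rightarrow> 'a set \<Rightarrow> 'a \<Rightarrow> 'a set" where
  "sign_cone \<sigma> R p = {v. \<forall>x\<in>R.
     (representation \<sigma> p x > 0 \<longrightarrow> representation \<sigma> v x \<ge> 0) \<and>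
     (representation \<sigma> p x < 0 \<longrightarrow> representation \<sigma> v x > 0)}"

lemma cone_p_eq_sign_cone:
  assumes "independent \<sigma>" "span \<sigma> = UNIV"
  shows "cone_p \<sigma> p = sign_cone \<sigma> \<sigma> p"
proof (intro set_eqI iffI)
  fix v assume "v \<in> cone_p \<sigma> p"
  then obtain t where "v = (\<Sum>a\<in>\<sigma>. t a *\<^sub>R a)"
    and "\<forall>a\<in>\<sigma>. (representation \<sigma> p a > 0 \<longrightarrow> t a \<ge> 0) \<and> (representation \<sigma> p a < 0 \<longrightarrow> t a > 0)"
    unfolding cone_p_def by blast
  then show "v \<in> sign_cone \<sigma> \<sigma> p"
    using assms(1) by (simp add: sign_cone_def representation_sum_scaleR)
next
  fix v assume "v \<in> sign_cone \<sigma> \<sigma> p"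
  moreover have "v = (\<Sum>a\<in>\<sigma>. representation \<sigma> v a *\<^sub>R a)"
    using assms by (simp add: sum_representation_eq finiteI_independent)
  ultimately show "v \<in> cone_p \<sigma> p"
    unfolding cone_p_def sign_cone_def by blast
qed

lemma sign_cone_iff_nonneg:
  assumes "\<forall>x\<in>R. representation \<sigma> p x \<noteq> 0"
  shows "v \<in> sign_cone \<sigma> R p \<longleftrightarrow>
    (\<forall>x\<in>R. 0 \<le> representation \<sigma> v x) \<and> (\<forall>x\<in>{x\<in>R. representation \<sigma> p x < 0}. 0 < representation \<sigma> v x)"
proof (intro iffI conjI ballI)
  fix x assume "v \<in> sign_cone \<sigma> R p" "x \<in> R"
  then have "(representation \<sigma> p x > 0 \<longrightarrow> representation \<sigma> v x \<ge> 0)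
      \<and> (representation \<sigma> p x < 0 \<longrightarrow> representation \<sigma> v x > 0)"
    unfolding sign_cone_def by blast
  then show "0 \<le> representation \<sigma> v x"
    using assms \<open>x \<in> R\<close> by (cases "representation \<sigma> p x > 0") auto
next
  fix x assume "v \<in> sign_cone \<sigma> R p" "x \<in> {x\<in>R. representation \<sigma> p x < 0}"
  then show "0 < representation \<sigma> v x"
    unfolding sign_cone_def by blast
next
  assume "(\<forall>x\<in>R. 0 \<le> representation \<sigma> v x) \<and> (\<forall>x\<in>{x\<in>R. representation \<sigma> p x < 0}. 0 < representation \<sigma> v x)"
  then show "v \<in> sign_cone \<sigma> R p"
    unfolding sign_cone_def by auto
qed

section \<open>Exchanging a basis vector\<close>

definition dependence_coeff :: "'a::euclidean_space set \<Rightarrow> 'a \<Rightarrow> 'a \<Rightarrow> real" where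
  "dependence_coeff \<sigma> \<alpha> x = representation \<sigma> \<alpha> x - of_bool (x = \<alpha>)"

locale basis_extension =
  fixes \<sigma> :: "'a::euclidean_space set" and \<alpha> :: 'a
  assumes independent: "independent \<sigma>" and spanning: "span \<sigma> = UNIV" and new: "\<alpha> \<notin> \<sigma>"
begin

lemma representation_new [simp]: "representation \<sigma> w \<alpha> = 0"
  using new representation_ne_zero by blast

lemma dependence_coeff_new [simp]: "dependence_coeff \<sigma> \<alpha> \<alpha> = -1"
  by (simp add: dependence_coeff_def)

lemma dependence_coeff_basis [simp]: "x \<in> \<sigma> \<Longrightarrow> dependence_coeff \<sigma> \<alpha> x = representation \<sigma> \<alpha> x"
  using new by (auto simp: dependence_coeff_def)

lemma dependence_coeff_support:
  "{x. dependence_coeff \<sigma> \<alpha> x \<noteq> 0} = insert \<alpha> {\<beta>\<in>\<sigma>. representation \<sigma> \<alpha> \<beta> \<noteq> 0}"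
  using new representation_ne_zero by (auto simp: dependence_coeff_def)

lemma sum_insert_new: "(\<Sum>x\<in>insert \<alpha> \<sigma>. g x *\<^sub>R x) = g \<alpha> *\<^sub>R \<alpha> + (\<Sum>x\<in>\<sigma>. g x *\<^sub>R x)"
  using new independent by (simp add: finiteI_independent)

lemma sum_representation_insert_new: "(\<Sum>x\<in>insert \<alpha> \<sigma>. representation \<sigma> w x *\<^sub>R x) = w"
  using independent spanning by (simp add: sum_insert_new sum_representation_eq finiteI_independent)

lemma sum_dependence_coeff: "(\<Sum>x\<in>insert \<alpha> \<sigma>. dependence_coeff \<sigma> \<alpha> x *\<^sub>R x) = 0"
proof -
  have "(\<Sum>x\<in>\<sigma>. dependence_coeff \<sigma> \<alpha> x *\<^sub>R x) = \<alpha>"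
    using independent spanning by (simp add: sum_representation_eq finiteI_independent)
  then show ?thesis
    by (simp add: sum_insert_new)
qed

lemma representation_insert_new:
  assumes "x \<in> \<sigma>"
  shows "representation \<sigma> (\<Sum>y\<in>insert \<alpha> \<sigma>. g y *\<^sub>R y) x = g x + g \<alpha> * representation \<sigma> \<alpha> x"
  using independent spanning assms
  by (simp add: sum_insert_new representation_add representation_scale representation_sum_scaleR)

lemma exchange_basis:
  assumes "dependence_coeff \<sigma> \<alpha> y \<noteq> 0"
  shows "independent (insert \<alpha> \<sigma> - {y})" and "span (insert \<alpha> \<sigma> - {y}) = UNIV"
proof -
  let ?s = "insert \<alpha> \<sigma> - {y}" and ?c = "dependence_coeff \<sigma> \<alpha>"
  have y: "y \<in> insert \<alpha> \<sigma>"
    using assms dependence_coeff_support by blast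
  have "?c y *\<^sub>R y + (\<Sum>x\<in>?s. ?c x *\<^sub>R x) = 0"
    using sum.remove[OF _ y, of "\<lambda>x. ?c x *\<^sub>R x"] sum_dependence_coeff independent
    by (simp add: finiteI_independent)
  then have yc: "?c y *\<^sub>R y = - (\<Sum>x\<in>?s. ?c x *\<^sub>R x)"
    by (simp add: eq_neg_iff_add_eq_0)
  have "y = (1 / ?c y) *\<^sub>R (?c y *\<^sub>R y)"
    using assms by simp
  also have "\<dots> = (- 1 / ?c y) *\<^sub>R (\<Sum>x\<in>?s. ?c x *\<^sub>R x)"
    unfolding yc by simp
  also have "\<dots> \<in> span ?s"
    by (intro span_sum span_scale span_base)
  finally have "\<sigma> \<subseteq> span ?s"
    using span_base[of _ ?s] by blast
  then have "span \<sigma> \<subseteq> span ?s"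
    by (simp add: span_minimal)
  then show span: "span ?s = UNIV"
    using spanning by auto
  have "card ?s = card \<sigma>"
    using y new independent by (cases "y = \<alpha>") (auto simp: finiteI_independent)
  also have "\<dots> = DIM('a)"
    using independent spanning basis_card_eq_dim[of \<sigma> UNIV] by simp
  finally show "independent ?s"
    using card_le_dim_spanning[of ?s UNIV] independent span
    by (simp add: finiteI_independent)
qed

lemma representation_exchange:
  assumes "dependence_coeff \<sigma> \<alpha> y \<noteq> 0" "x \<in> insert \<alpha> \<sigma> - {y}"
  shows "representation (insert \<alpha> \<sigma> - {y}) w x
     = representation \<sigma> w x - representation \<sigma> w y / dependence_coeff \<sigma> \<alpha> y * dependence_coeff \<sigma> \<alpha> x"
proof -
  let ?s = "insert \<alpha> \<sigma> - {y}" and ?c = "dependence_coeff \<sigma> \<alpha>"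
  define k where "k = representation \<sigma> w y / ?c y"
  define g where "g x = representation \<sigma> w x - k * ?c x" for x
  have y: "y \<in> insert \<alpha> \<sigma>"
    using assms(1) dependence_coeff_support by blast
  have "(\<Sum>x\<in>insert \<alpha> \<sigma>. g x *\<^sub>R x)
      = (\<Sum>x\<in>insert \<alpha> \<sigma>. representation \<sigma> w x *\<^sub>R x) - k *\<^sub>R (\<Sum>x\<in>insert \<alpha> \<sigma>. ?c x *\<^sub>R x)"
    by (simp add: g_def scaleR_diff_left sum_subtractf scaleR_sum_right)
  also have "\<dots> = w"
    by (simp add: sum_representation_insert_new sum_dependence_coeff)
  finally have "(\<Sum>x\<in>insert \<alpha> \<sigma>. g x *\<^sub>R x) = w" .
  moreover have "(\<Sum>x\<in>insert \<alpha> \<sigma>. g x *\<^sub>R x) = (\<Sum>x\<in>?s. g x *\<^sub>R x)"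
    using sum.remove[OF _ y, of "\<lambda>x. g x *\<^sub>R x"] assms(1) independent
    by (simp add: finiteI_independent g_def k_def)
  ultimately have "representation ?s w x = g x"
    using representation_sum_scaleR[OF exchange_basis(1)[OF assms(1)] assms(2), of g] by simp
  then show ?thesis
    by (simp add: g_def k_def)
qed

end

section \<open>Cones containing a line\<close>

context basis_extension
begin

lemma pcone_insert_support_coordinates:
  assumes K: "K \<subseteq> {\<beta>\<in>\<sigma>. representation \<sigma> \<alpha> \<beta> = 0}"
    and v: "v \<in> pcone (insert \<alpha> {\<beta>\<in>\<sigma>. representation \<sigma> \<alpha> \<beta> \<noteq> 0} \<union> K)"
  shows "(\<forall>x\<in>K. 0 \<le> representation \<sigma> v x)
    \<and> (\<forall>x\<in>{\<beta>\<in>\<sigma>. representation \<sigma> \<alpha> \<beta> = 0} - K. representation \<sigma> v x = 0)"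
proof -
  let ?\<kappa> = "insert \<alpha> {\<beta>\<in>\<sigma>. representation \<sigma> \<alpha> \<beta> \<noteq> 0} \<union> K"
  obtain u where u: "v = (\<Sum>x\<in>?\<kappa>. u x *\<^sub>R x)" "\<forall>x\<in>?\<kappa>. 0 \<le> u x"
    using v unfolding pcone_def by blast
  define g where "g x = (if x \<in> ?\<kappa> then u x else 0)" for x
  have "(\<Sum>x\<in>insert \<alpha> \<sigma>. g x *\<^sub>R x) = (\<Sum>x\<in>?\<kappa>. g x *\<^sub>R x)"
    using K independent by (intro sum.mono_neutral_right) (auto simp: g_def finiteI_independent)
  also have "\<dots> = v"
    unfolding u(1) by (intro sum.cong) (auto simp: g_def)
  finally have "representation \<sigma> v x = g x" if "x \<in> \<sigma>" "representation \<sigma> \<alpha> x = 0" for x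
    using representation_insert_new[OF that(1), of g] that(2) by simp
  then show ?thesis
    using K u(2) new by (auto simp: g_def)
qed

lemma coordinates_in_pcone_insert_support:
  assumes nonpos: "\<forall>\<beta>\<in>\<sigma>. representation \<sigma> \<alpha> \<beta> \<le> 0"
    and K: "K \<subseteq> {\<beta>\<in>\<sigma>. representation \<sigma> \<alpha> \<beta> = 0}"
    and t: "\<forall>x\<in>K. 0 \<le> representation \<sigma> v x"
      "\<forall>x\<in>{\<beta>\<in>\<sigma>. representation \<sigma> \<alpha> \<beta> = 0} - K. representation \<sigma> v x = 0"
  shows "v \<in> pcone (insert \<alpha> {\<beta>\<in>\<sigma>. representation \<sigma> \<alpha> \<beta> \<noteq> 0} \<union> K)"
proof -
  let ?S\<^sub>0 = "{\<beta>\<in>\<sigma>. representation \<sigma> \<alpha> \<beta> \<noteq> 0}" and ?t = "representation \<sigma> v"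
  let ?c = "representation \<sigma> \<alpha>"
  let ?\<kappa> = "insert \<alpha> ?S\<^sub>0 \<union> K"
  \<comment> \<open>Subtracting M times the vanishing dependence makes all coefficients on \<open>?S\<^sub>0\<close> nonnegative,
    because there \<open>?c < 0\<close>, and gives \<alpha> the coefficient M.\<close>
  define M where "M = (\<Sum>x\<in>?S\<^sub>0. \<bar>?t x\<bar> / \<bar>?c x\<bar>)"
  define u where "u x = ?t x - M * dependence_coeff \<sigma> \<alpha> x" for x
  have "M \<ge> 0"
    unfolding M_def by (intro sum_nonneg) simp
  have "(\<Sum>x\<in>insert \<alpha> \<sigma>. u x *\<^sub>R x)
      = (\<Sum>x\<in>insert \<alpha> \<sigma>. ?t x *\<^sub>R x) - M *\<^sub>R (\<Sum>x\<in>insert \<alpha> \<sigma>. dependence_coeff \<sigma> \<alpha> x *\<^sub>R x)"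
    by (simp add: u_def scaleR_diff_left sum_subtractf scaleR_sum_right)
  also have "\<dots> = v"
    by (simp add: sum_representation_insert_new sum_dependence_coeff)
  also have "(\<Sum>x\<in>insert \<alpha> \<sigma>. u x *\<^sub>R x) = (\<Sum>x\<in>?\<kappa>. u x *\<^sub>R x)"
    using K t(2) independent by (intro sum.mono_neutral_right) (auto simp: u_def finiteI_independent)
  finally have v: "v = (\<Sum>x\<in>?\<kappa>. u x *\<^sub>R x)" ..
  have "0 \<le> u x" if "x \<in> ?S\<^sub>0" for x
  proof -
    have "\<bar>?t x\<bar> / \<bar>?c x\<bar> \<le> M"
      unfolding M_def using that independent by (intro member_le_sum) (auto simp: finiteI_independent)
    moreover have "?c x < 0"
      using that nonpos by force
    ultimately have "\<bar>?t x\<bar> \<le> M * \<bar>?c x\<bar>"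
      using pos_divide_le_eq[of "\<bar>?c x\<bar>"] by simp
    then show ?thesis
      using that \<open>?c x < 0\<close> abs_ge_minus_self[of "?t x"] by (simp add: u_def abs_of_neg)
  qed
  then have "\<forall>x\<in>?\<kappa>. 0 \<le> u x"
    using K t(1) \<open>M \<ge> 0\<close> by (auto simp: u_def)
  with v show ?thesis
    unfolding pcone_def by blast
qed

lemma pcone_insert_support_iff:
  assumes "\<forall>\<beta>\<in>\<sigma>. representation \<sigma> \<alpha> \<beta> \<le> 0" "K \<subseteq> {\<beta>\<in>\<sigma>. representation \<sigma> \<alpha> \<beta> = 0}"
  shows "v \<in> pcone (insert \<alpha> {\<beta>\<in>\<sigma>. representation \<sigma> \<alpha> \<beta> \<noteq> 0} \<union> K)
     \<longleftrightarrow> (\<forall>x\<in>K. 0 \<le> representation \<sigma> v x)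
       \<and> (\<forall>x\<in>{\<beta>\<in>\<sigma>. representation \<sigma> \<alpha> \<beta> = 0} - K. representation \<sigma> v x = 0)"
  using assms pcone_insert_support_coordinates coordinates_in_pcone_insert_support by blast

lemma contains_line_pcone_insert_support:
  assumes "\<forall>\<beta>\<in>\<sigma>. representation \<sigma> \<alpha> \<beta> \<le> 0" "K \<subseteq> {\<beta>\<in>\<sigma>. representation \<sigma> \<alpha> \<beta> = 0}" "\<alpha> \<noteq> 0"
  shows "contains_line (pcone (insert \<alpha> {\<beta>\<in>\<sigma>. representation \<sigma> \<alpha> \<beta> \<noteq> 0} \<union> K))"
  unfolding contains_line_def
proof (intro exI conjI allI)
  fix r :: real
  have "representation \<sigma> (r *\<^sub>R \<alpha>) x = r * representation \<sigma> \<alpha> x" for x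
    using independent spanning by (simp add: representation_scale)
  then have "r *\<^sub>R \<alpha> \<in> pcone (insert \<alpha> {\<beta>\<in>\<sigma>. representation \<sigma> \<alpha> \<beta> \<noteq> 0} \<union> K)"
    using assms(1,2) by (intro coordinates_in_pcone_insert_support) auto
  then show "0 + r *\<^sub>R \<alpha> \<in> pcone (insert \<alpha> {\<beta>\<in>\<sigma>. representation \<sigma> \<alpha> \<beta> \<noteq> 0} \<union> K)"
    by simp
qed fact

end

lemma LC_signed_sum:
  assumes "finite \<Delta>" "finite I" "\<forall>i\<in>I. \<kappa> i \<subseteq> \<Delta> \<and> contains_line (pcone (\<kappa> i))"
  shows "(\<lambda>v. \<Sum>i\<in>I. n i * indicator (pcone (\<kappa> i)) v) \<in> LC \<Delta>"
proof -
  let ?K = "{\<kappa>. \<kappa> \<subseteq> \<Delta> \<and> contains_line (pcone \<kappa>)}"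
  define m where "m K = (\<Sum>i\<in>{i\<in>I. \<kappa> i = K}. n i)" for K
  have "(\<Sum>K\<in>?K. m K * indicator (pcone K) v) = (\<Sum>i\<in>I. n i * indicator (pcone (\<kappa> i)) v)" for v
  proof -
    have "(\<Sum>K\<in>?K. m K * indicator (pcone K) v)
        = (\<Sum>K\<in>?K. \<Sum>i\<in>{i\<in>I. \<kappa> i = K}. n i * indicator (pcone (\<kappa> i)) v)"
      unfolding m_def sum_distrib_right by (intro sum.cong) auto
    also have "\<dots> = (\<Sum>i\<in>I. n i * indicator (pcone (\<kappa> i)) v)"
      using assms by (intro sum.group) auto
    finally show ?thesis .
  qed
  then show ?thesis
    unfolding LC_def by (intro CollectI exI[of _ m]) auto
qed

(* With t = representation \<sigma> v and \<lambda> = dependence_coeff \<sigma> \<alpha>, the representations of v over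
   insert \<alpha> \<sigma> form the line t - s \<lambda>, and the one over insert \<alpha> \<sigma> - {y} sits at s = t\<^sub>y / \<lambda>\<^sub>y;
   the second entry breaks ties by the same parameter for p. *)
definition ratio_key :: "'a::euclidean_space set \<Rightarrow> 'a \<Rightarrow> 'a \<Rightarrow> 'a \<Rightarrow> 'a \<Rightarrow> real list" where
  "ratio_key \<sigma> \<alpha> p v x
     = [representation \<sigma> v x / dependence_coeff \<sigma> \<alpha> x, representation \<sigma> p x / dependence_coeff \<sigma> \<alpha> x]"

locale generic_basis_extension =
  fixes \<Delta> \<sigma> :: "'a::euclidean_space set" and \<alpha> p :: 'a
  assumes basis: "\<sigma> \<in> bases \<Delta>" and extension: "\<alpha> \<in> \<Delta> - \<sigma>" and generic: "p \<in> Vreg \<Delta>"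

sublocale generic_basis_extension \<subseteq> basis_extension \<sigma> \<alpha>
  using basis extension by unfold_locales (auto simp: bases_def)

context generic_basis_extension
begin

lemma exchange_in_bases: "dependence_coeff \<sigma> \<alpha> y \<noteq> 0 \<Longrightarrow> insert \<alpha> \<sigma> - {y} \<in> bases \<Delta>"
  using exchange_basis basis extension by (auto simp: bases_def)

lemma inj_on_ratio_key: "inj_on (ratio_key \<sigma> \<alpha> p v) {x. dependence_coeff \<sigma> \<alpha> x \<noteq> 0}"
proof (rule inj_onI, rule ccontr)
  fix x y
  assume x: "x \<in> {x. dependence_coeff \<sigma> \<alpha> x \<noteq> 0}" and y: "y \<in> {x. dependence_coeff \<sigma> \<alpha> x \<noteq> 0}"
    and key: "ratio_key \<sigma> \<alpha> p v x = ratio_key \<sigma> \<alpha> p v y" and "x \<noteq> y"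
  then have x': "x \<in> insert \<alpha> \<sigma> - {y}"
    using dependence_coeff_support by auto
  have "representation (insert \<alpha> \<sigma> - {y}) p x
      = dependence_coeff \<sigma> \<alpha> x * (representation \<sigma> p x / dependence_coeff \<sigma> \<alpha> x
          - representation \<sigma> p y / dependence_coeff \<sigma> \<alpha> y)"
    using representation_exchange[OF _ x', of p] x y by (simp add: right_diff_distrib)
  also have "\<dots> = 0"
    using key by (simp add: ratio_key_def)
  finally show False
    using representation_Vreg_nonzero[OF exchange_in_bases generic x'] y by simp
qed

lemma cone_p_exchange_iff:
  assumes y: "dependence_coeff \<sigma> \<alpha> y \<noteq> 0"
  shows "v \<in> cone_p (insert \<alpha> \<sigma> - {y}) p
     \<longleftrightarrow> v \<in> sign_cone \<sigma> {\<beta>\<in>\<sigma>. representation \<sigma> \<alpha> \<beta> = 0} p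
       \<and> sign_split (dependence_coeff \<sigma> \<alpha>) (ratio_key \<sigma> \<alpha> p v) {x. dependence_coeff \<sigma> \<alpha> x \<noteq> 0} y"
proof -
  let ?s = "insert \<alpha> \<sigma> - {y}" and ?c = "dependence_coeff \<sigma> \<alpha>" and ?w = "ratio_key \<sigma> \<alpha> p v"
  define cond where "cond B x \<longleftrightarrow> (representation B p x > 0 \<longrightarrow> representation B v x \<ge> 0)
      \<and> (representation B p x < 0 \<longrightarrow> representation B v x > 0)" for B x
  have cone: "v \<in> cone_p ?s p \<longleftrightarrow> (\<forall>x\<in>?s. cond ?s x)"
    unfolding cone_p_eq_sign_cone[OF exchange_basis[OF y]] by (simp add: sign_cone_def cond_def)
  have unchanged: "cond ?s x \<longleftrightarrow> cond \<sigma> x" if "x \<in> ?s" "?c x = 0" for x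
    using representation_exchange[OF y that(1)] that(2) by (simp add: cond_def)
  have reordered: "cond ?s x \<longleftrightarrow> (?c x > 0 \<longrightarrow> ?w y < ?w x) \<and> (?c x < 0 \<longrightarrow> ?w x < ?w y)"
    if "x \<in> ?s" "?c x \<noteq> 0" for x
  proof -
    let ?r = "\<lambda>u z. representation \<sigma> u z / ?c z"
    have "representation ?s u x = ?c x * (?r u x - ?r u y)" for u
      using representation_exchange[OF y that(1), of u] that(2) y by (simp add: right_diff_distrib)
    moreover have "?r p x \<noteq> ?r p y"
      using representation_Vreg_nonzero[OF exchange_in_bases[OF y] generic that(1)]
        calculation[of p] by auto
    ultimately show ?thesis
      using sign_condition_iff_lex[OF that(2)] by (simp add: cond_def ratio_key_def)
  qed
  have "?s = {\<beta>\<in>\<sigma>. representation \<sigma> \<alpha> \<beta> = 0} \<union> ({x. ?c x \<noteq> 0} - {y})"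
    using y dependence_coeff_support new by auto
  then have "(\<forall>x\<in>?s. cond ?s x) \<longleftrightarrow> (\<forall>x\<in>{\<beta>\<in>\<sigma>. representation \<sigma> \<alpha> \<beta> = 0}. cond \<sigma> x)
      \<and> (\<forall>x\<in>{x. ?c x \<noteq> 0} - {y}. (?c x > 0 \<longrightarrow> ?w y < ?w x) \<and> (?c x < 0 \<longrightarrow> ?w x < ?w y))"
    using unchanged reordered by auto
  then show ?thesis
    unfolding cone by (simp add: sign_cone_def sign_split_def cond_def)
qed

lemma sum_sign_split_ratio_key:
  "(\<Sum>y\<in>{x. dependence_coeff \<sigma> \<alpha> x \<noteq> 0}. sign_int (dependence_coeff \<sigma> \<alpha> y)
      * of_bool (sign_split (dependence_coeff \<sigma> \<alpha>) (ratio_key \<sigma> \<alpha> p v) {x. dependence_coeff \<sigma> \<alpha> x \<noteq> 0} y))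
   = - of_bool (\<forall>\<beta>\<in>\<sigma>. representation \<sigma> \<alpha> \<beta> \<le> 0)"
proof -
  let ?S = "{x. dependence_coeff \<sigma> \<alpha> x \<noteq> 0}" and ?c = "dependence_coeff \<sigma> \<alpha>"
  have fin: "finite ?S"
    unfolding dependence_coeff_support using independent by (simp add: finiteI_independent)
  have "\<alpha> \<in> ?S" "\<not> ?c \<alpha> > 0"
    by simp_all
  then have "\<not> (\<forall>x\<in>?S. ?c x > 0)"
    by blast
  moreover have "(\<forall>x\<in>?S. ?c x < 0) \<longleftrightarrow> (\<forall>\<beta>\<in>\<sigma>. representation \<sigma> \<alpha> \<beta> \<le> 0)"
    unfolding dependence_coeff_support by (force simp: le_less)
  ultimately show ?thesis
    using sum_sign_split[OF fin inj_on_ratio_key[of v]] by simp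
qed

lemma signed_exchange_sum_cone_p:
  "of_bool (v \<in> cone_p \<sigma> p)
     - (\<Sum>\<beta>\<in>{\<beta>\<in>\<sigma>. representation \<sigma> \<alpha> \<beta> \<noteq> 0}.
          sign_int (representation \<sigma> \<alpha> \<beta>) * of_bool (v \<in> cone_p (insert \<alpha> \<sigma> - {\<beta>}) p))
   = (of_bool (v \<in> sign_cone \<sigma> {\<beta>\<in>\<sigma>. representation \<sigma> \<alpha> \<beta> = 0} p
       \<and> (\<forall>\<beta>\<in>\<sigma>. representation \<sigma> \<alpha> \<beta> \<le> 0)) :: int)"
proof -
  let ?S = "{x. dependence_coeff \<sigma> \<alpha> x \<noteq> 0}" and ?c = "dependence_coeff \<sigma> \<alpha>"
  let ?G = "sign_cone \<sigma> {\<beta>\<in>\<sigma>. representation \<sigma> \<alpha> \<beta> = 0} p"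
  let ?in = "\<lambda>y. of_bool (v \<in> cone_p (insert \<alpha> \<sigma> - {y}) p) :: int"
  have "insert \<alpha> \<sigma> - {\<alpha>} = \<sigma>"
    using new by auto
  moreover have "(\<Sum>y\<in>?S. sign_int (?c y) * ?in y)
      = sign_int (?c \<alpha>) * ?in \<alpha>
        + (\<Sum>\<beta>\<in>{\<beta>\<in>\<sigma>. representation \<sigma> \<alpha> \<beta> \<noteq> 0}. sign_int (?c \<beta>) * ?in \<beta>)"
    using new independent unfolding dependence_coeff_support by (simp add: finiteI_independent)
  ultimately have exchange_sum: "(\<Sum>y\<in>?S. sign_int (?c y) * ?in y)
      = - of_bool (v \<in> cone_p \<sigma> p)
        + (\<Sum>\<beta>\<in>{\<beta>\<in>\<sigma>. representation \<sigma> \<alpha> \<beta> \<noteq> 0}. sign_int (representation \<sigma> \<alpha> \<beta>) * ?in \<beta>)"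
    by (simp add: sign_int_def)
  have "(\<Sum>y\<in>?S. sign_int (?c y) * ?in y)
      = of_bool (v \<in> ?G) * (\<Sum>y\<in>?S. sign_int (?c y) * of_bool (sign_split ?c (ratio_key \<sigma> \<alpha> p v) ?S y))"
    unfolding sum_distrib_left by (intro sum.cong) (simp_all add: cone_p_exchange_iff)
  also have "\<dots> = - of_bool (v \<in> ?G \<and> (\<forall>\<beta>\<in>\<sigma>. representation \<sigma> \<alpha> \<beta> \<le> 0))"
    by (simp add: sum_sign_split_ratio_key)
  finally show ?thesis
    using exchange_sum by linarith
qed

lemma indicator_sign_cone_eq_sum:
  assumes nonpos: "\<forall>\<beta>\<in>\<sigma>. representation \<sigma> \<alpha> \<beta> \<le> 0"
  defines "\<rho> \<equiv> {\<beta>\<in>\<sigma>. representation \<sigma> \<alpha> \<beta> = 0}"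
  shows "indicator (sign_cone \<sigma> \<rho> p) v
    = (\<Sum>T\<in>Pow {x\<in>\<rho>. representation \<sigma> p x < 0}.
         (-1) ^ card T * indicator (pcone (insert \<alpha> {\<beta>\<in>\<sigma>. representation \<sigma> \<alpha> \<beta> \<noteq> 0} \<union> (\<rho> - T))) v :: int)"
proof -
  let ?N = "{x\<in>\<rho>. representation \<sigma> p x < 0}" and ?t = "representation \<sigma> v"
  have "\<forall>x\<in>\<rho>. representation \<sigma> p x \<noteq> 0"
    using representation_Vreg_nonzero[OF basis generic] by (auto simp: \<rho>_def)
  then have "indicator (sign_cone \<sigma> \<rho> p) v = (of_bool ((\<forall>x\<in>\<rho>. 0 \<le> ?t x) \<and> (\<forall>x\<in>?N. 0 < ?t x)) :: int)"
    by (simp add: indicator_def sign_cone_iff_nonneg)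
  also have "\<dots> = (\<Sum>T\<in>Pow ?N. (-1) ^ card T * of_bool ((\<forall>x\<in>\<rho> - T. 0 \<le> ?t x) \<and> (\<forall>x\<in>T. ?t x = 0)))"
    using independent by (intro of_bool_positive_inclusion_exclusion) (auto simp: \<rho>_def finiteI_independent)
  also have "\<dots> = (\<Sum>T\<in>Pow ?N. (-1) ^ card T
      * indicator (pcone (insert \<alpha> {\<beta>\<in>\<sigma>. representation \<sigma> \<alpha> \<beta> \<noteq> 0} \<union> (\<rho> - T))) v)"
  proof (intro sum.cong refl)
    fix T assume "T \<in> Pow ?N"
    then have complement: "\<rho> - (\<rho> - T) = T"
      by auto
    have K: "\<rho> - T \<subseteq> {\<beta>\<in>\<sigma>. representation \<sigma> \<alpha> \<beta> = 0}"
      by (auto simp: \<rho>_def)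
    show "(-1) ^ card T * of_bool ((\<forall>x\<in>\<rho> - T. 0 \<le> ?t x) \<and> (\<forall>x\<in>T. ?t x = 0))
        = (-1) ^ card T * indicator (pcone (insert \<alpha> {\<beta>\<in>\<sigma>. representation \<sigma> \<alpha> \<beta> \<noteq> 0} \<union> (\<rho> - T))) v"
      unfolding indicator_def pcone_insert_support_iff[OF nonpos K] \<rho>_def[symmetric] complement
      by (rule refl)
  qed
  finally show ?thesis .
qed

lemma sign_cone_in_LC:
  assumes "finite \<Delta>" "0 \<notin> \<Delta>" and nonpos: "\<forall>\<beta>\<in>\<sigma>. representation \<sigma> \<alpha> \<beta> \<le> 0"
  shows "(indicator (sign_cone \<sigma> {\<beta>\<in>\<sigma>. representation \<sigma> \<alpha> \<beta> = 0} p) :: 'a \<Rightarrow> int) \<in> LC \<Delta>"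
proof -
  let ?\<rho> = "{\<beta>\<in>\<sigma>. representation \<sigma> \<alpha> \<beta> = 0}"
  let ?\<kappa> = "\<lambda>T. insert \<alpha> {\<beta>\<in>\<sigma>. representation \<sigma> \<alpha> \<beta> \<noteq> 0} \<union> (?\<rho> - T)"
  have "\<alpha> \<noteq> 0"
    using assms(2) extension by auto
  have "?\<kappa> T \<subseteq> \<Delta> \<and> contains_line (pcone (?\<kappa> T))" for T
  proof
    show "?\<kappa> T \<subseteq> \<Delta>"
      using basis extension by (auto simp: bases_def)
    show "contains_line (pcone (?\<kappa> T))"
      by (rule contains_line_pcone_insert_support[OF nonpos _ \<open>\<alpha> \<noteq> 0\<close>]) blast
  qed
  then have "(\<lambda>v. \<Sum>T\<in>Pow {x\<in>?\<rho>. representation \<sigma> p x < 0}. (-1) ^ card T * indicator (pcone (?\<kappa> T)) v)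
      \<in> LC \<Delta>"
    using assms(1) independent by (intro LC_signed_sum) (auto simp: finiteI_independent)
  then show ?thesis
    by (simp add: indicator_sign_cone_eq_sum[OF nonpos, abs_def])
qed

lemma signed_exchange_sum_in_LC:
  assumes "finite \<Delta>" "0 \<notin> \<Delta>"
  shows "(\<lambda>v. of_bool (v \<in> cone_p \<sigma> p)
     - (\<Sum>\<beta>\<in>{\<beta>\<in>\<sigma>. representation \<sigma> \<alpha> \<beta> \<noteq> 0}.
          sign_int (representation \<sigma> \<alpha> \<beta>) * of_bool (v \<in> cone_p (insert \<alpha> \<sigma> - {\<beta>}) p))) \<in> LC \<Delta>"
proof (cases "\<forall>\<beta>\<in>\<sigma>. representation \<sigma> \<alpha> \<beta> \<le> 0")
  case True
  then show ?thesis
    using sign_cone_in_LC[OF assms True] by (simp add: signed_exchange_sum_cone_p indicator_def[abs_def])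
next
  case False
  then have "(\<forall>\<beta>\<in>\<sigma>. representation \<sigma> \<alpha> \<beta> \<le> 0) = False"
    by blast
  then show ?thesis
    using LC_signed_sum[of \<Delta> "{}"] assms(1) by (simp only: signed_exchange_sum_cone_p) simp
qed

end

lemma A_gamma_eq_indicator_cone_p:
  assumes "\<gamma> \<in> components (Vreg \<Delta>)"
  obtains p where "p \<in> Vreg \<Delta>" and "\<And>\<sigma>. A_gamma \<gamma> \<sigma> = indicator (cone_p \<sigma> p)"
proof
  have "(SOME p. p \<in> \<gamma>) \<in> \<gamma>"
    using in_components_nonempty[OF assms] by (simp add: some_in_eq)
  then show "(SOME p. p \<in> \<gamma>) \<in> Vreg \<Delta>"
    using in_components_subset[OF assms] by blast
qed (simp add: A_gamma_def cone_gamma_def)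

theorem mainTheorem17:
  fixes \<Delta> :: "'a::euclidean_space set"
  assumes "finite \<Delta>" and "0 \<notin> \<Delta>" and "span \<Delta> = UNIV" and "uminus ` \<Delta> = \<Delta>"
    and "\<gamma> \<in> components (Vreg \<Delta>)"
    and "\<sigma> \<in> bases \<Delta>" and "\<alpha> \<in> \<Delta> - \<sigma>"
  shows "(\<lambda>v. A_gamma \<gamma> \<sigma> v
            - (\<Sum>\<beta>\<in>{\<beta>\<in>\<sigma>. representation \<sigma> \<alpha> \<beta> \<noteq> 0}.
                 sign_int (representation \<sigma> \<alpha> \<beta>) * A_gamma \<gamma> (insert \<alpha> \<sigma> - {\<beta>}) v))
         \<in> LC \<Delta>"
proof -
  obtain p where "p \<in> Vreg \<Delta>" and A: "\<And>\<sigma>. A_gamma \<gamma> \<sigma> = indicator (cone_p \<sigma> p)"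
    using A_gamma_eq_indicator_cone_p[OF assms(5)] by blast
  then interpret generic_basis_extension \<Delta> \<sigma> \<alpha> p
    using assms(6,7) by unfold_locales
  show ?thesis
    using signed_exchange_sum_in_LC[OF assms(1,2)] by (simp add: A indicator_def)
qed

end
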